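(* In any finite ELP, let $\pi$ be a policy, $\rho_\pi$ its stationary distribution, and define $\lambda_\pi(s,a)=\rho_\pi(s)\pi(a|s)\mathbb E_\pi[T]$. Then for every $Q\in\mathcal Q$, $$\mathcal L_\pi(Q,\lambda_\pi)=J(\pi)+\sum_{s\notin\mathcal S_\bot}\sum_{a\in\mathcal A}\lambda_\pi(s,a)\Big(\max_{\bar a}Q(s,\bar a)-Q(s,a)\Big).$$
   Context: A finite ELP is $(\mathcal S,\mathcal A,P,R,\rho)$ with finite $\mathcal S,\mathcal A$, reward $R:\mathcal S\to\mathbb R$, transitions $P(s'|s,a)$, distribution $\rho$, and nonempty terminal set $\mathcal S_\bot$. Under a policy $\pi$, $S_0$ is a fixed terminal state, $A_t\sim\pi(\cdot|S_t)$, $S_{t+1}\sim P(\cdot|S_t,A_t)$, and $T=\inf\{t\ge1:S_t\in\mathcal S_\bot\}$. ELP conditions: $\mathbb E_\pi[T]<\infty$ for every $\pi$; $P(s'|s,a)=\rho(s')$ for all $s\in\mathcal S_\bot$, all $a,s'$; every state is reachable under some policy. $J(\pi)=\mathbb E_\pi[\sum_{t=1}^TR(S_t)]$. $\mathcal Q$ = all functions $\mathcal S\times\mathcal A\to\mathbb R$. $\mathcal BQ(s,a)=\sum_{s'}P(s'|s,a)\big(R(s')+\mathbf 1[s'\notin\mathcal S_\bot]\max_{a'}Q(s',a')\big)$. $\mathcal L_\pi(Q,\lambda)=\mathbb E_\pi[Q(S_T,A_T)]+\sum_{s,a}\lambda(s,a)(\mathcal BQ(s,a)-Q(s,a))$ with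 $A_T\sim\pi(\cdot|S_T)$. In a finite ELP, the Markov chain on $\mathcal S$ with kernel $\sum_aP(s'|s,a)\pi(a|s)$ has a unique stationary distribution, denoted $\rho_\pi$. *)

theory Defs
  imports Complex_Main "HOL-Library.Extended_Nonnegative_Real"
begin

text \<open>Finite state space = finite type 's, finite action space = finite type 'a.
  Transition kernel: P s a s' = P(s'|s,a). Policy: pol s a = pol(a|s).\<close>

definition is_dist :: "('s::finite \<Rightarrow> real) \<Rightarrow> bool" where
  "is_dist d \<longleftrightarrow> (\<forall>s. 0 \<le> d s) \<and> sum d UNIV = 1"

definition is_policy :: "('s::finite \<Rightarrow> 'a::finite \<Rightarrow> real) \<Rightarrow> bool" where
  "is_policy pol \<longleftrightarrow> (\<forall>s. is_dist (pol s))"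

text \<open>Probability weight of the continuation (S_1,A_1),...,(S_n,A_n) given (S_0,A_0)=(s,a).\<close>
fun traj_weight :: "('s \<Rightarrow> 'a \<Rightarrow> 's \<Rightarrow> real) \<Rightarrow> ('s \<Rightarrow> 'a \<Rightarrow> real) \<Rightarrow> 's \<Rightarrow> 'a
    \<Rightarrow> ('s \<times> 'a) list \<Rightarrow> real" where
  "traj_weight P pol s a [] = 1"
| "traj_weight P pol s a ((s', a') # xs) = P s a s' * pol s' a' * traj_weight P pol s' a' xs"

text \<open>Probability that ((S_1,A_1),...,(S_n,A_n)) = xs, where S_0 = s0 and A_0 ~ pol(.|s0).\<close>
definition traj_prob :: "('s \<Rightarrow> 'a::finite \<Rightarrow> 's \<Rightarrow> real) \<Rightarrow> ('s \<Rightarrow> 'a \<Rightarrow> real) \<Rightarrow> 's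
    \<Rightarrow> ('s \<times> 'a) list \<Rightarrow> real" where
  "traj_prob P pol s0 xs = (\<Sum>a0\<in>UNIV. pol s0 a0 * traj_weight P pol s0 a0 xs)"

text \<open>The prefix xs = ((S_1,A_1),...,(S_n,A_n)) is such that T = n = length xs.\<close>
definition hits_at :: "'s set \<Rightarrow> ('s \<times> 'a) list \<Rightarrow> bool" where
  "hits_at Sbot xs \<longleftrightarrow> xs \<noteq> [] \<and> fst (last xs) \<in> Sbot
      \<and> (\<forall>i < length xs - 1. fst (xs ! i) \<notin> Sbot)"

definition term_paths :: "'s set \<Rightarrow> nat \<Rightarrow> ('s \<times> 'a) list set" where
  "term_paths Sbot n = {xs. length xs = n \<and> hits_at Sbot xs}"

definition prob_T :: "('s::finite \<Rightarrow> 'a::finite \<Rightarrow> 's \<Rightarrow> real) \<Rightarrow> ('s \<Rightarrow> 'a \<Rightarrow> real) \<Rightarrow> 's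
    \<Rightarrow> 's set \<Rightarrow> nat \<Rightarrow> real" where
  "prob_T P pol s0 Sbot n = (\<Sum>xs\<in>term_paths Sbot n. traj_prob P pol s0 xs)"

text \<open>E_pi[T] in [0,\<infinity>]: sum of n Pr(T=n), plus \<infinity> times Pr(T = \<infinity>).\<close>
definition expected_T :: "('s::finite \<Rightarrow> 'a::finite \<Rightarrow> 's \<Rightarrow> real) \<Rightarrow> ('s \<Rightarrow> 'a \<Rightarrow> real) \<Rightarrow> 's
    \<Rightarrow> 's set \<Rightarrow> ennreal" where
  "expected_T P pol s0 Sbot =
     (\<Sum>n. ennreal (real n * prob_T P pol s0 Sbot n))
     + \<infinity> * (1 - (\<Sum>n. ennreal (prob_T P pol s0 Sbot n)))"

text \<open>E_pi[f(S_1,A_1,...,S_T,A_T)] (the event T = \<infinity> has probability zero in an ELP).\<close>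
definition expect_T :: "('s::finite \<Rightarrow> 'a::finite \<Rightarrow> 's \<Rightarrow> real) \<Rightarrow> ('s \<Rightarrow> 'a \<Rightarrow> real) \<Rightarrow> 's
    \<Rightarrow> 's set \<Rightarrow> (('s \<times> 'a) list \<Rightarrow> real) \<Rightarrow> real" where
  "expect_T P pol s0 Sbot f =
     (\<Sum>n. \<Sum>xs\<in>term_paths Sbot n. traj_prob P pol s0 xs * f xs)"

definition J :: "('s::finite \<Rightarrow> 'a::finite \<Rightarrow> 's \<Rightarrow> real) \<Rightarrow> ('s \<Rightarrow> real) \<Rightarrow> ('s \<Rightarrow> 'a \<Rightarrow> real)
    \<Rightarrow> 's \<Rightarrow> 's set \<Rightarrow> real" where
  "J P R pol s0 Sbot = expect_T P pol s0 Sbot (\<lambda>xs. \<Sum>i<length xs. R (fst (xs ! i)))"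

text \<open>Finite episodic learning problem (ELP); S_0 = s0 is the fixed terminal start state.\<close>
definition finite_ELP :: "('s::finite \<Rightarrow> 'a::finite \<Rightarrow> 's \<Rightarrow> real) \<Rightarrow> ('s \<Rightarrow> real) \<Rightarrow> 's set
    \<Rightarrow> 's \<Rightarrow> bool" where
  "finite_ELP P \<rho> Sbot s0 \<longleftrightarrow>
     (\<forall>s a. is_dist (P s a)) \<and> is_dist \<rho> \<and> Sbot \<noteq> {} \<and> s0 \<in> Sbot
     \<and> (\<forall>pol. is_policy pol \<longrightarrow> expected_T P pol s0 Sbot < \<infinity>)
     \<and> (\<forall>s\<in>Sbot. \<forall>a s'. P s a s' = \<rho> s')
     \<and> (\<forall>s. \<exists>pol. is_policy pol \<and>
          (s = s0 \<or> (\<exists>xs. xs \<noteq> [] \<and> fst (last xs) = s \<and> traj_prob P pol s0 xs > 0)))"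

definition is_stationary :: "('s::finite \<Rightarrow> 'a::finite \<Rightarrow> 's \<Rightarrow> real) \<Rightarrow> ('s \<Rightarrow> 'a \<Rightarrow> real)
    \<Rightarrow> ('s \<Rightarrow> real) \<Rightarrow> bool" where
  "is_stationary P pol d \<longleftrightarrow> is_dist d \<and>
     (\<forall>s'. d s' = (\<Sum>s\<in>UNIV. d s * (\<Sum>a\<in>UNIV. P s a s' * pol s a)))"

definition bellman :: "('s::finite \<Rightarrow> 'a::finite \<Rightarrow> 's \<Rightarrow> real) \<Rightarrow> ('s \<Rightarrow> real) \<Rightarrow> 's set
    \<Rightarrow> ('s \<Rightarrow> 'a \<Rightarrow> real) \<Rightarrow> 's \<Rightarrow> 'a \<Rightarrow> real" where
  "bellman P R Sbot Q s a =
     (\<Sum>s'\<in>UNIV. P s a s' * (R s' + (if s' \<notin> Sbot then Max (range (Q s')) else 0)))"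

definition lagrangian :: "('s::finite \<Rightarrow> 'a::finite \<Rightarrow> 's \<Rightarrow> real) \<Rightarrow> ('s \<Rightarrow> real)
    \<Rightarrow> ('s \<Rightarrow> 'a \<Rightarrow> real) \<Rightarrow> 's \<Rightarrow> 's set \<Rightarrow> ('s \<Rightarrow> 'a \<Rightarrow> real) \<Rightarrow> ('s \<Rightarrow> 'a \<Rightarrow> real) \<Rightarrow> real" where
  "lagrangian P R pol s0 Sbot Q lam =
     expect_T P pol s0 Sbot (\<lambda>xs. Q (fst (last xs)) (snd (last xs)))
     + (\<Sum>s\<in>UNIV. \<Sum>a\<in>UNIV. lam s a * (bellman P R Sbot Q s a - Q s a))"

definition lambda_pi :: "('s::finite \<Rightarrow> 'a::finite \<Rightarrow> 's \<Rightarrow> real) \<Rightarrow> ('s \<Rightarrow> 'a \<Rightarrow> real)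
    \<Rightarrow> ('s \<Rightarrow> real) \<Rightarrow> 's \<Rightarrow> 's set \<Rightarrow> 's \<Rightarrow> 'a \<Rightarrow> real" where
  "lambda_pi P pol d s0 Sbot s a = d s * pol s a * enn2real (expected_T P pol s0 Sbot)"

end

theory Submission
  imports Defs
begin

text \<open>Let \<open>m\<^sub>n(s) = Pr(T > n, S\<^sub>n\<^sub>+\<^sub>1 = s)\<close> and let \<open>\<mu> = \<Sum>\<^sub>n m\<^sub>n\<close> be the occupation measure
  of one episode. Summing over paths gives \<open>J(\<pi>) = \<Sum>\<^sub>s \<mu>(s) R(s)\<close>,
  \<open>E[Q(S\<^sub>T,A\<^sub>T)] = \<Sum>\<^sub>s\<^sub>\<in>\<^sub>S\<^sub>\<bottom> \<mu>(s) \<Sum>\<^sub>a \<pi>(a|s) Q(s,a)\<close> and \<open>\<Sum>\<^sub>s \<mu>(s) = E[T]\<close>. Since every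
  episode restarts from \<open>\<rho>\<close>, \<open>\<mu>\<close> is invariant for the state chain \<open>K\<close>. Conversely, for a
  stationary \<open>d\<close> the difference \<open>d - d(S\<^sub>\<bottom>) \<mu>\<close> is a nonnegative solution of
  \<open>v = \<Sum>\<^sub>s\<^sub>\<notin>\<^sub>S\<^sub>\<bottom> v(s) K(s,\<cdot>)\<close>; its support would be a set of non-terminal states that the
  chain never leaves, which reachability together with \<open>E[T] < \<infinity>\<close> for every policy rules out.
  Hence \<open>d = \<mu> / E[T]\<close>, i.e. \<open>\<lambda>\<^sub>\<pi>(s,a) = \<mu>(s) \<pi>(a|s)\<close>, and the identity follows by exchanging
  summations in \<open>\<Sum> \<lambda>\<^sub>\<pi> \<B>Q\<close> and using the invariance of \<open>\<mu>\<close>.\<close>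

lemma sum_UNIV_Compl_split:
  fixes f :: "'x::finite \<Rightarrow> 'b::comm_monoid_add"
  shows "(\<Sum>x\<in>UNIV. f x) = (\<Sum>x\<in>A. f x) + (\<Sum>x\<in>-A. f x)"
  by (metis Compl_eq_Diff_UNIV add.commute finite_UNIV subset_UNIV sum.subset_diff)

definition surviving_paths :: "'s set \<Rightarrow> nat \<Rightarrow> ('s \<times> 'a) list set" where
  "surviving_paths Sbot n = {xs. length xs = n \<and> (\<forall>i<n. fst (xs ! i) \<notin> Sbot)}"

text \<open>The probability that \<open>((S\<^sub>1,A\<^sub>1),\<dots>,(S\<^sub>n,A\<^sub>n)) = ys\<close> and \<open>S\<^sub>n\<^sub>+\<^sub>1 = s'\<close>.\<close>
definition next_state_prob :: "('s \<Rightarrow> 'a::finite \<Rightarrow> 's \<Rightarrow> real) \<Rightarrow> ('s \<Rightarrow> 'a \<Rightarrow> real) \<Rightarrow> 's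
    \<Rightarrow> ('s \<times> 'a) list \<Rightarrow> 's \<Rightarrow> real" where
  "next_state_prob P pol s0 ys s' = (\<Sum>a0\<in>UNIV. pol s0 a0 * traj_weight P pol s0 a0 ys
      * P (fst (last ((s0,a0)#ys))) (snd (last ((s0,a0)#ys))) s')"

lemma traj_weight_snoc:
  "traj_weight P pol s a (ys @ [(s',a')]) =
     traj_weight P pol s a ys * P (fst (last ((s,a)#ys))) (snd (last ((s,a)#ys))) s' * pol s' a'"
  by (induction ys arbitrary: s a) (auto simp: algebra_simps)

lemma traj_prob_snoc:
  "traj_prob P pol s0 (ys @ [(s',a')]) = next_state_prob P pol s0 ys s' * pol s' a'"
  unfolding traj_prob_def next_state_prob_def traj_weight_snoc sum_distrib_right
  by (simp add: algebra_simps)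

lemma next_state_prob_snoc:
  "next_state_prob P pol s0 (ys @ [(s,a)]) s' = next_state_prob P pol s0 ys s * pol s a * P s a s'"
  unfolding next_state_prob_def traj_weight_snoc sum_distrib_right by (simp add: algebra_simps)

lemma sum_next_state_prob:
  assumes "\<And>s a. sum (P s a) UNIV = 1"
  shows "(\<Sum>s'\<in>UNIV. next_state_prob P pol s0 ys s') = traj_prob P pol s0 ys"
  unfolding next_state_prob_def traj_prob_def
  by (subst sum.swap) (simp add: assms flip: sum_distrib_left)

lemma sum_snoc_image:
  "sum f ((\<lambda>(ys, x). ys @ [x]) ` (A \<times> B)) = (\<Sum>ys\<in>A. \<Sum>x\<in>B. f (ys @ [x]))"
proof -
  have "inj_on (\<lambda>(ys, x). ys @ [x]) (A \<times> B)" by (auto simp: inj_on_def)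
  then have "sum f ((\<lambda>(ys, x). ys @ [x]) ` (A \<times> B)) = (\<Sum>(ys, x)\<in>A \<times> B. f (ys @ [x]))"
    by (rule sum.reindex_cong) auto
  then show ?thesis by (simp add: sum.cartesian_product')
qed

lemma surviving_paths_0: "surviving_paths Sbot 0 = {[]}"
  by (auto simp: surviving_paths_def)

lemma surviving_paths_Suc:
  "surviving_paths Sbot (Suc n) = (\<lambda>(ys, x). ys @ [x]) ` (surviving_paths Sbot n \<times> {x. fst x \<notin> Sbot})"
proof (intro set_eqI iffI)
  fix xs assume "xs \<in> surviving_paths Sbot (Suc n)"
  then have len: "length xs = Suc n" and alive: "\<forall>i<Suc n. fst (xs ! i) \<notin> Sbot"
    by (auto simp: surviving_paths_def)
  then obtain ys x where xs: "xs = ys @ [x]" by (metis length_Suc_conv_rev)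
  have "fst (ys ! i) \<notin> Sbot" if "i < n" for i
    using alive[rule_format, of i] that len by (simp add: xs nth_append)
  moreover have "fst x \<notin> Sbot"
    using alive[rule_format, of "length ys"] len by (simp add: xs)
  ultimately have "ys \<in> surviving_paths Sbot n" "fst x \<notin> Sbot"
    using len by (auto simp: surviving_paths_def xs)
  then show "xs \<in> (\<lambda>(ys, x). ys @ [x]) ` (surviving_paths Sbot n \<times> {x. fst x \<notin> Sbot})"
    using xs by force
qed (auto simp: surviving_paths_def nth_append less_Suc_eq)

lemma term_paths_0: "term_paths Sbot 0 = {}"
  by (auto simp: term_paths_def hits_at_def)

lemma term_paths_Suc:
  "term_paths Sbot (Suc n) = (\<lambda>(ys, x). ys @ [x]) ` (surviving_paths Sbot n \<times> {x. fst x \<in> Sbot})"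
proof (intro set_eqI iffI)
  fix xs assume "xs \<in> term_paths Sbot (Suc n)"
  then have len: "length xs = Suc n" and alive: "\<forall>i<n. fst (xs ! i) \<notin> Sbot"
    and hit: "fst (last xs) \<in> Sbot"
    by (auto simp: term_paths_def hits_at_def)
  then obtain ys x where xs: "xs = ys @ [x]" by (metis length_Suc_conv_rev)
  with len alive hit have "ys \<in> surviving_paths Sbot n" "fst x \<in> Sbot"
    by (auto simp: surviving_paths_def nth_append)
  then show "xs \<in> (\<lambda>(ys, x). ys @ [x]) ` (surviving_paths Sbot n \<times> {x. fst x \<in> Sbot})"
    using xs by force
qed (auto simp: surviving_paths_def term_paths_def hits_at_def nth_append)

lemma sum_surviving_paths_Suc:
  fixes f :: "('s::finite \<times> 'a::finite) list \<Rightarrow> 'b::comm_monoid_add"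
  shows "sum f (surviving_paths Sbot (Suc n))
    = (\<Sum>ys\<in>surviving_paths Sbot n. \<Sum>s\<in>-Sbot. \<Sum>a\<in>UNIV. f (ys @ [(s,a)]))"
proof -
  have "{x::'s \<times> 'a. fst x \<notin> Sbot} = (- Sbot) \<times> UNIV" by auto
  then show ?thesis
    by (simp add: surviving_paths_Suc sum_snoc_image sum.cartesian_product')
qed

lemma sum_term_paths_Suc:
  fixes f :: "('s::finite \<times> 'a::finite) list \<Rightarrow> 'b::comm_monoid_add"
  shows "sum f (term_paths Sbot (Suc n))
    = (\<Sum>ys\<in>surviving_paths Sbot n. \<Sum>s\<in>Sbot. \<Sum>a\<in>UNIV. f (ys @ [(s,a)]))"
proof -
  have "{x::'s \<times> 'a. fst x \<in> Sbot} = Sbot \<times> UNIV" by auto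
  then show ?thesis
    by (simp add: term_paths_Suc sum_snoc_image sum.cartesian_product')
qed

definition path_reward :: "('s \<Rightarrow> real) \<Rightarrow> ('s \<times> 'a) list \<Rightarrow> real" where
  "path_reward R xs = (\<Sum>i<length xs. R (fst (xs ! i)))"

lemma path_reward_Nil: "path_reward R [] = 0"
  by (simp add: path_reward_def)

lemma path_reward_snoc: "path_reward R (ys @ [(s,a)]) = path_reward R ys + R s"
  by (simp add: path_reward_def nth_append)

lemma abs_path_reward_le: "\<bar>path_reward R xs\<bar> \<le> real (length xs) * (\<Sum>s\<in>UNIV. \<bar>R s\<bar>)"
  for R :: "'s::finite \<Rightarrow> real"
proof -
  have "\<bar>path_reward R xs\<bar> \<le> (\<Sum>i<length xs. \<bar>R (fst (xs ! i))\<bar>)"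
    unfolding path_reward_def by (rule sum_abs)
  also have "\<dots> \<le> (\<Sum>i<length xs. \<Sum>s\<in>UNIV. \<bar>R s\<bar>)"
    by (intro sum_mono member_le_sum) auto
  finally show ?thesis by simp
qed

definition state_kernel :: "('s \<Rightarrow> 'a::finite \<Rightarrow> 's \<Rightarrow> real) \<Rightarrow> ('s \<Rightarrow> 'a \<Rightarrow> real) \<Rightarrow> 's \<Rightarrow> 's \<Rightarrow> real"
  where "state_kernel P pol s s' = (\<Sum>a\<in>UNIV. P s a s' * pol s a)"

text \<open>\<open>alive_occupancy P pol \<rho> Sbot n s\<close> is \<open>Pr(T > n, S\<^sub>n\<^sub>+\<^sub>1 = s)\<close>; the base case is \<open>\<rho>\<close>
  because \<open>S\<^sub>0\<close> is terminal.\<close>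
fun alive_occupancy :: "('s::finite \<Rightarrow> 'a::finite \<Rightarrow> 's \<Rightarrow> real) \<Rightarrow> ('s \<Rightarrow> 'a \<Rightarrow> real)
    \<Rightarrow> ('s \<Rightarrow> real) \<Rightarrow> 's set \<Rightarrow> nat \<Rightarrow> 's \<Rightarrow> real" where
  "alive_occupancy P pol \<rho> Sbot 0 s = \<rho> s"
| "alive_occupancy P pol \<rho> Sbot (Suc n) s' =
     (\<Sum>s\<in>-Sbot. alive_occupancy P pol \<rho> Sbot n s * state_kernel P pol s s')"

lemma alive_occupancy_nonneg:
  assumes "\<And>s. 0 \<le> \<rho> s" and "\<And>s s'. 0 \<le> state_kernel P pol s s'"
  shows "0 \<le> alive_occupancy P pol \<rho> Sbot n s"
  by (induction n arbitrary: s) (auto intro!: sum_nonneg mult_nonneg_nonneg assms)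

lemma alive_occupancy_Suc_ge:
  assumes "\<And>s. 0 \<le> \<rho> s" and "\<And>s s'. 0 \<le> state_kernel P pol s s'" and "s \<notin> Sbot"
  shows "alive_occupancy P pol \<rho> Sbot n s * state_kernel P pol s s'
    \<le> alive_occupancy P pol \<rho> Sbot (Suc n) s'"
  using assms
  by (auto intro!: member_le_sum[where f = "\<lambda>t. alive_occupancy P pol \<rho> Sbot n t * state_kernel P pol t s'"]
      mult_nonneg_nonneg alive_occupancy_nonneg)

lemma state_kernel_ge:
  assumes "\<And>a. 0 \<le> P s a s'" and "\<And>a. 0 \<le> pol s a"
  shows "P s a s' * pol s a \<le> state_kernel P pol s s'"
  unfolding state_kernel_def by (rule member_le_sum) (auto intro: mult_nonneg_nonneg assms)

locale elp =
  fixes P :: "'s::finite \<Rightarrow> 'a::finite \<Rightarrow> 's \<Rightarrow> real" and \<rho> :: "'s \<Rightarrow> real"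
    and Sbot :: "'s set" and s0 :: 's
  assumes elp: "finite_ELP P \<rho> Sbot s0"
begin

lemma P_nonneg: "0 \<le> P s a s'"
  using elp by (auto simp: finite_ELP_def is_dist_def)

lemma sum_P: "sum (P s a) UNIV = 1"
  using elp by (auto simp: finite_ELP_def is_dist_def)

lemma rho_nonneg: "0 \<le> \<rho> s"
  using elp by (auto simp: finite_ELP_def is_dist_def)

lemma s0_terminal: "s0 \<in> Sbot"
  using elp by (auto simp: finite_ELP_def)

lemma P_terminal: "s \<in> Sbot \<Longrightarrow> P s a s' = \<rho> s'"
  using elp by (auto simp: finite_ELP_def)

lemma expected_T_less_top: "is_policy pol \<Longrightarrow> expected_T P pol s0 Sbot < \<infinity>"
  using elp by (auto simp: finite_ELP_def)

end

locale elp_policy = elp P \<rho> Sbot s0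
  for P :: "'s::finite \<Rightarrow> 'a::finite \<Rightarrow> 's \<Rightarrow> real" and \<rho> Sbot s0 +
  fixes pol :: "'s \<Rightarrow> 'a \<Rightarrow> real"
  assumes policy: "is_policy pol"
begin

abbreviation K :: "'s \<Rightarrow> 's \<Rightarrow> real" where
  "K \<equiv> state_kernel P pol"

abbreviation occ :: "nat \<Rightarrow> 's \<Rightarrow> real" where
  "occ \<equiv> alive_occupancy P pol \<rho> Sbot"

abbreviation p :: "nat \<Rightarrow> real" where
  "p \<equiv> prob_T P pol s0 Sbot"

lemma pol_nonneg: "0 \<le> pol s a"
  using policy by (auto simp: is_policy_def is_dist_def)

lemma sum_pol: "sum (pol s) UNIV = 1"
  using policy by (auto simp: is_policy_def is_dist_def)

lemma K_nonneg: "0 \<le> K s s'"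
  unfolding state_kernel_def by (intro sum_nonneg mult_nonneg_nonneg P_nonneg pol_nonneg)

lemma sum_K: "(\<Sum>s'\<in>UNIV. K s s') = 1"
  unfolding state_kernel_def
  by (subst sum.swap) (simp add: sum_P sum_pol flip: sum_distrib_right)

lemma K_terminal: "s \<in> Sbot \<Longrightarrow> K s s' = \<rho> s'"
  unfolding state_kernel_def by (simp add: P_terminal sum_pol flip: sum_distrib_left)

lemma occ_nonneg: "0 \<le> occ n s"
  by (intro alive_occupancy_nonneg rho_nonneg K_nonneg)

lemma traj_prob_Nil: "traj_prob P pol s0 [] = 1"
  by (simp add: traj_prob_def sum_pol)

lemma traj_prob_nonneg: "0 \<le> traj_prob P pol s0 ys"
proof -
  have "0 \<le> traj_weight P pol s a ys" for s a
    by (induction ys arbitrary: s a) (auto intro!: mult_nonneg_nonneg P_nonneg pol_nonneg)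
  then show ?thesis
    unfolding traj_prob_def by (intro sum_nonneg mult_nonneg_nonneg pol_nonneg)
qed

lemma next_state_prob_Nil: "next_state_prob P pol s0 [] s = \<rho> s"
  by (simp add: next_state_prob_def P_terminal[OF s0_terminal] sum_pol flip: sum_distrib_right)

lemma sum_next_state_prob_surviving:
  "(\<Sum>ys\<in>surviving_paths Sbot n. next_state_prob P pol s0 ys s) = occ n s"
proof (induction n arbitrary: s)
  case 0
  then show ?case by (simp add: surviving_paths_0 next_state_prob_Nil)
next
  case (Suc n)
  have "(\<Sum>ys\<in>surviving_paths Sbot (Suc n). next_state_prob P pol s0 ys s)
      = (\<Sum>ys\<in>surviving_paths Sbot n. \<Sum>s'\<in>-Sbot. next_state_prob P pol s0 ys s' * K s' s)"
    unfolding sum_surviving_paths_Suc next_state_prob_snoc state_kernel_def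
    by (simp add: sum_distrib_left algebra_simps)
  also have "\<dots> = (\<Sum>s'\<in>-Sbot. occ n s' * K s' s)"
    by (subst sum.swap) (simp add: Suc flip: sum_distrib_right)
  finally show ?case by simp
qed

definition survival :: "nat \<Rightarrow> real" where
  "survival n = (\<Sum>ys\<in>surviving_paths Sbot n. traj_prob P pol s0 ys)"

lemma survival_eq_sum_occ: "survival n = (\<Sum>s\<in>UNIV. occ n s)"
proof -
  have "survival n = (\<Sum>ys\<in>surviving_paths Sbot n. \<Sum>s\<in>UNIV. next_state_prob P pol s0 ys s)"
    unfolding survival_def by (simp add: sum_next_state_prob sum_P)
  also have "\<dots> = (\<Sum>s\<in>UNIV. occ n s)"
    by (subst sum.swap) (simp add: sum_next_state_prob_surviving)
  finally show ?thesis .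
qed

lemma survival_nonneg: "0 \<le> survival n"
  unfolding survival_eq_sum_occ by (intro sum_nonneg occ_nonneg)

lemma survival_Suc: "survival (Suc n) = (\<Sum>s\<in>-Sbot. occ n s)"
proof -
  have "survival (Suc n) = (\<Sum>ys\<in>surviving_paths Sbot n. \<Sum>s\<in>-Sbot. next_state_prob P pol s0 ys s)"
    unfolding survival_def sum_surviving_paths_Suc traj_prob_snoc
    by (simp add: sum_pol flip: sum_distrib_left)
  also have "\<dots> = (\<Sum>s\<in>-Sbot. occ n s)"
    by (subst sum.swap) (simp add: sum_next_state_prob_surviving)
  finally show ?thesis .
qed

lemma prob_T_0: "p 0 = 0"
  by (simp add: prob_T_def term_paths_0)

lemma prob_T_Suc: "p (Suc n) = (\<Sum>s\<in>Sbot. occ n s)"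
proof -
  have "p (Suc n) = (\<Sum>ys\<in>surviving_paths Sbot n. \<Sum>s\<in>Sbot. next_state_prob P pol s0 ys s)"
    unfolding prob_T_def sum_term_paths_Suc traj_prob_snoc
    by (simp add: sum_pol flip: sum_distrib_left)
  also have "\<dots> = (\<Sum>s\<in>Sbot. occ n s)"
    by (subst sum.swap) (simp add: sum_next_state_prob_surviving)
  finally show ?thesis .
qed

lemma prob_T_nonneg: "0 \<le> p n"
  by (cases n) (auto simp: prob_T_0 prob_T_Suc intro!: sum_nonneg occ_nonneg)

lemma survival_recurrence: "survival n = p (Suc n) + survival (Suc n)"
  unfolding survival_eq_sum_occ[of n] prob_T_Suc survival_Suc by (rule sum_UNIV_Compl_split)

lemma survival_eq_one_minus: "survival n = 1 - (\<Sum>k\<le>n. p k)"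
proof (induction n)
  case 0
  then show ?case by (simp add: survival_def surviving_paths_0 traj_prob_Nil prob_T_0)
next
  case (Suc n)
  then show ?case using survival_recurrence[of n] by simp
qed

lemma expected_T_finite_parts:
  "(\<Sum>n. ennreal (real n * p n)) < \<infinity>" "(\<Sum>n. ennreal (p n)) \<ge> 1"
proof -
  have "(\<Sum>n. ennreal (real n * p n)) + \<infinity> * (1 - (\<Sum>n. ennreal (p n))) < \<infinity>"
    using expected_T_less_top[OF policy] by (simp add: expected_T_def)
  then show "(\<Sum>n. ennreal (real n * p n)) < \<infinity>" "(\<Sum>n. ennreal (p n)) \<ge> 1"
    by (auto simp: ennreal_mult_less_top diff_eq_0_iff_ennreal)
qed

lemma summable_n_prob_T: "summable (\<lambda>n. real n * p n)"
  using expected_T_finite_parts(1)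
  by (intro summable_suminf_not_top) (auto intro: mult_nonneg_nonneg prob_T_nonneg)

lemma summable_prob_T: "summable p"
proof (rule summable_comparison_test[OF _ summable_n_prob_T])
  have "p n \<le> real n * p n" if "n \<ge> 1" for n
    using mult_right_mono[OF _ prob_T_nonneg, of 1 "real n" n] that by simp
  then show "\<exists>N. \<forall>n\<ge>N. norm (p n) \<le> real n * p n"
    by (auto simp: prob_T_nonneg)
qed

lemma suminf_prob_T: "suminf p = 1"
proof (rule antisym)
  show "suminf p \<le> 1"
  proof (rule suminf_le_const[OF summable_prob_T])
    fix n
    show "sum p {..<n} \<le> 1"
      using survival_eq_one_minus[of "n - 1"] survival_nonneg[of "n - 1"]
      by (cases n) (simp_all add: lessThan_Suc_atMost)
  qed
  have "ennreal 1 \<le> ennreal (suminf p)"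
    using expected_T_finite_parts(2) suminf_ennreal2[OF prob_T_nonneg summable_prob_T] by simp
  then show "1 \<le> suminf p"
    by (simp add: ennreal_le_iff2 suminf_nonneg[OF summable_prob_T prob_T_nonneg])
qed

definition mean_T :: real where
  "mean_T = (\<Sum>n. real n * p n)"

lemma enn2real_expected_T: "enn2real (expected_T P pol s0 Sbot) = mean_T"
proof -
  have "(\<Sum>n. ennreal (p n)) = 1"
    using suminf_ennreal2[OF prob_T_nonneg summable_prob_T] by (simp add: suminf_prob_T)
  moreover have "(\<Sum>n. ennreal (real n * p n)) = ennreal mean_T"
    unfolding mean_T_def
    by (rule suminf_ennreal2[OF _ summable_n_prob_T]) (auto intro: mult_nonneg_nonneg prob_T_nonneg)
  moreover have "0 \<le> mean_T"
    unfolding mean_T_def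
    by (intro suminf_nonneg summable_n_prob_T mult_nonneg_nonneg prob_T_nonneg) simp
  ultimately show ?thesis by (simp add: expected_T_def)
qed

lemma survival_eq_tail: "survival n = (\<Sum>k. p (k + Suc n))"
  using survival_eq_one_minus[of n] suminf_minus_initial_segment[OF summable_prob_T, of "Suc n"]
  by (simp add: suminf_prob_T lessThan_Suc_atMost)

lemma survival_tendsto_0: "survival \<longlonglongrightarrow> 0"
proof -
  have "(\<lambda>n. \<Sum>k<Suc n. p k) \<longlonglongrightarrow> suminf p"
    using summable_LIMSEQ[OF summable_prob_T] by (rule LIMSEQ_Suc)
  then have "(\<lambda>n. 1 - (\<Sum>k<Suc n. p k)) \<longlonglongrightarrow> 1 - suminf p"
    by (intro tendsto_intros)
  moreover have "survival = (\<lambda>n. 1 - (\<Sum>k<Suc n. p k))"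
    by (rule ext) (simp add: survival_eq_one_minus lessThan_Suc_atMost)
  ultimately show ?thesis
    by (simp add: suminf_prob_T)
qed

text \<open>\<open>n Pr(T > n) \<le> E[T; T > n]\<close>, a tail of a convergent series.\<close>
lemma n_survival_tendsto_0: "(\<lambda>n. real n * survival n) \<longlonglongrightarrow> 0"
proof (rule tendsto_sandwich[of "\<lambda>_. 0" _ _ "\<lambda>n. mean_T - (\<Sum>j<Suc n. real j * p j)"])
  show "\<forall>\<^sub>F n in sequentially. 0 \<le> real n * survival n"
    by (intro always_eventually allI mult_nonneg_nonneg survival_nonneg) simp
  show "\<forall>\<^sub>F n in sequentially. real n * survival n \<le> mean_T - (\<Sum>j<Suc n. real j * p j)"
  proof (intro always_eventually allI)
    fix n
    have tail: "summable (\<lambda>k. p (k + Suc n))"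
      using summable_prob_T by (rule summable_ignore_initial_segment)
    have weighted_tail: "summable (\<lambda>k. real (k + Suc n) * p (k + Suc n))"
      using summable_ignore_initial_segment[OF summable_n_prob_T, of "Suc n"] by simp
    have "real n * survival n = (\<Sum>k. real n * p (k + Suc n))"
      unfolding survival_eq_tail by (rule suminf_mult[OF tail, symmetric])
    also have "\<dots> \<le> (\<Sum>k. real (k + Suc n) * p (k + Suc n))"
      by (rule suminf_le[OF _ summable_mult[OF tail] weighted_tail])
        (auto intro: mult_right_mono prob_T_nonneg)
    also have "\<dots> = mean_T - (\<Sum>j<Suc n. real j * p j)"
      unfolding mean_T_def using suminf_minus_initial_segment[OF summable_n_prob_T, of "Suc n"]
      by simp
    finally show "real n * survival n \<le> mean_T - (\<Sum>j<Suc n. real j * p j)" .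
  qed
  have "(\<lambda>n. \<Sum>j<Suc n. real j * p j) \<longlonglongrightarrow> mean_T"
    unfolding mean_T_def using summable_LIMSEQ[OF summable_n_prob_T] by (rule LIMSEQ_Suc)
  then have "(\<lambda>n. mean_T - (\<Sum>j<Suc n. real j * p j)) \<longlonglongrightarrow> mean_T - mean_T"
    by (intro tendsto_intros)
  then show "(\<lambda>n. mean_T - (\<Sum>j<Suc n. real j * p j)) \<longlonglongrightarrow> 0"
    by simp
qed simp

lemma sum_survival_lessThan: "(\<Sum>n<N. survival n) = (\<Sum>k<Suc N. real k * p k) + real N * survival N"
proof (induction N)
  case 0
  then show ?case by (simp add: prob_T_0)
next
  case (Suc N)
  then show ?case using survival_recurrence[of N] by (simp add: algebra_simps)
qed

lemma survival_sums: "survival sums mean_T"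
proof -
  have "(\<lambda>N. (\<Sum>k<Suc N. real k * p k) + real N * survival N) \<longlonglongrightarrow> mean_T + 0"
    using LIMSEQ_Suc[OF summable_LIMSEQ[OF summable_n_prob_T]] n_survival_tendsto_0
    unfolding mean_T_def by (intro tendsto_intros)
  then show ?thesis
    unfolding sums_def sum_survival_lessThan by simp
qed

definition occupancy :: "'s \<Rightarrow> real" where
  "occupancy s = (\<Sum>n. occ n s)"

lemma summable_occ: "summable (\<lambda>n. occ n s)"
proof (rule summable_comparison_test[OF _ sums_summable[OF survival_sums]])
  have "occ n s \<le> survival n" for n
    unfolding survival_eq_sum_occ by (rule member_le_sum) (auto intro: occ_nonneg)
  then show "\<exists>N. \<forall>n\<ge>N. norm (occ n s) \<le> survival n"
    by (auto simp: occ_nonneg)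
qed

lemma weighted_occ_sums: "(\<lambda>n. \<Sum>s\<in>A. occ n s * g s) sums (\<Sum>s\<in>A. occupancy s * g s)"
  unfolding occupancy_def by (intro sums_sum sums_mult2 summable_sums summable_occ)

lemma sum_occupancy: "(\<Sum>s\<in>UNIV. occupancy s) = mean_T"
proof -
  have "(\<lambda>n. \<Sum>s\<in>UNIV. occ n s * 1) sums (\<Sum>s\<in>UNIV. occupancy s * 1)"
    by (rule weighted_occ_sums)
  then have "survival sums (\<Sum>s\<in>UNIV. occupancy s)"
    by (simp add: survival_eq_sum_occ[abs_def])
  then show ?thesis
    using survival_sums sums_unique2 by blast
qed

lemma sum_occupancy_terminal: "(\<Sum>s\<in>Sbot. occupancy s) = 1"
proof -
  have "(\<lambda>n. \<Sum>s\<in>Sbot. occ n s * 1) sums (\<Sum>s\<in>Sbot. occupancy s * 1)"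
    by (rule weighted_occ_sums)
  then have "(\<lambda>n. p (Suc n)) sums (\<Sum>s\<in>Sbot. occupancy s)"
    by (simp add: prob_T_Suc)
  then have "p sums (\<Sum>s\<in>Sbot. occupancy s)"
    by (simp add: sums_Suc_iff prob_T_0)
  then show ?thesis
    using suminf_prob_T sums_unique by metis
qed

lemma occupancy_eq_rho_plus: "occupancy s' = \<rho> s' + (\<Sum>s\<in>-Sbot. occupancy s * K s s')"
proof -
  have "(\<lambda>n. occ (Suc n) s') sums (\<Sum>s\<in>-Sbot. occupancy s * K s s')"
    using weighted_occ_sums[where A="-Sbot" and g="\<lambda>s. K s s'"] by simp
  then have "(\<lambda>n. occ n s') sums ((\<Sum>s\<in>-Sbot. occupancy s * K s s') + \<rho> s')"
    using sums_Suc_iff[of "\<lambda>n. occ n s'"] by simp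
  from sums_unique2[OF this summable_sums[OF summable_occ]] show ?thesis
    by (simp add: occupancy_def)
qed

text \<open>Every visit to \<open>S\<^sub>\<bottom>\<close> is followed by a restart from \<open>\<rho>\<close>, and there is exactly one such visit.\<close>
lemma occupancy_invariant: "occupancy s' = (\<Sum>s\<in>UNIV. occupancy s * K s s')"
proof -
  have "(\<Sum>s\<in>Sbot. occupancy s * K s s') = \<rho> s'"
    using sum_occupancy_terminal by (simp add: K_terminal flip: sum_distrib_right)
  then show ?thesis
    using occupancy_eq_rho_plus[of s'] sum_UNIV_Compl_split[of "\<lambda>s. occupancy s * K s s'" Sbot]
    by simp
qed

lemma expect_T_terminal_Q:
  "expect_T P pol s0 Sbot (\<lambda>xs. Q (fst (last xs)) (snd (last xs)))
     = (\<Sum>s\<in>Sbot. occupancy s * (\<Sum>a\<in>UNIV. pol s a * Q s a))"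
proof -
  define q where "q n = (\<Sum>xs\<in>term_paths Sbot n.
      traj_prob P pol s0 xs * Q (fst (last xs)) (snd (last xs)))" for n
  have "q (Suc n) = (\<Sum>s\<in>Sbot. occ n s * (\<Sum>a\<in>UNIV. pol s a * Q s a))" for n
  proof -
    have "q (Suc n) = (\<Sum>ys\<in>surviving_paths Sbot n.
        \<Sum>s\<in>Sbot. next_state_prob P pol s0 ys s * (\<Sum>a\<in>UNIV. pol s a * Q s a))"
      unfolding q_def sum_term_paths_Suc traj_prob_snoc by (simp add: sum_distrib_left algebra_simps)
    then show ?thesis
      by (subst (asm) sum.swap) (simp add: sum_next_state_prob_surviving flip: sum_distrib_right)
  qed
  then have "(\<lambda>n. q (Suc n)) sums (\<Sum>s\<in>Sbot. occupancy s * (\<Sum>a\<in>UNIV. pol s a * Q s a))"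
    by (simp add: weighted_occ_sums)
  then have "q sums (\<Sum>s\<in>Sbot. occupancy s * (\<Sum>a\<in>UNIV. pol s a * Q s a))"
    using sums_Suc_iff[of q] by (simp add: q_def term_paths_0)
  then show ?thesis
    unfolding expect_T_def q_def[symmetric] using sums_unique by metis
qed

definition surviving_reward :: "('s \<Rightarrow> real) \<Rightarrow> nat \<Rightarrow> real" where
  "surviving_reward R n =
     (\<Sum>ys\<in>surviving_paths Sbot n. traj_prob P pol s0 ys * path_reward R ys)"

definition terminating_reward :: "('s \<Rightarrow> real) \<Rightarrow> nat \<Rightarrow> real" where
  "terminating_reward R n = (\<Sum>xs\<in>term_paths Sbot n. traj_prob P pol s0 xs * path_reward R xs)"

lemma terminating_reward_Suc:
  "terminating_reward R (Suc n)
     = surviving_reward R n - surviving_reward R (Suc n) + (\<Sum>s\<in>UNIV. occ n s * R s)"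
proof -
  have "terminating_reward R (Suc n) + surviving_reward R (Suc n) =
      (\<Sum>ys\<in>surviving_paths Sbot n. \<Sum>s\<in>UNIV.
         next_state_prob P pol s0 ys s * (path_reward R ys + R s))"
    unfolding terminating_reward_def surviving_reward_def sum_term_paths_Suc
      sum_surviving_paths_Suc traj_prob_snoc path_reward_snoc
    by (simp add: sum_pol sum_UNIV_Compl_split[of _ Sbot] sum.distrib
        flip: sum_distrib_left sum_distrib_right)
  also have "\<dots> = surviving_reward R n
      + (\<Sum>ys\<in>surviving_paths Sbot n. \<Sum>s\<in>UNIV. next_state_prob P pol s0 ys s * R s)"
    by (simp add: surviving_reward_def distrib_left sum.distrib sum_next_state_prob sum_P
        flip: sum_distrib_right)
  also have "(\<Sum>ys\<in>surviving_paths Sbot n. \<Sum>s\<in>UNIV. next_state_prob P pol s0 ys s * R s)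
      = (\<Sum>s\<in>UNIV. occ n s * R s)"
    by (subst sum.swap) (simp add: sum_next_state_prob_surviving flip: sum_distrib_right)
  finally show ?thesis by simp
qed

lemma abs_surviving_reward_le:
  "\<bar>surviving_reward R n\<bar> \<le> (\<Sum>s\<in>UNIV. \<bar>R s\<bar>) * (real n * survival n)"
proof -
  have "\<bar>surviving_reward R n\<bar>
      \<le> (\<Sum>ys\<in>surviving_paths Sbot n. traj_prob P pol s0 ys * \<bar>path_reward R ys\<bar>)"
    unfolding surviving_reward_def
    by (rule order_trans[OF sum_abs]) (simp add: abs_mult traj_prob_nonneg)
  also have "\<dots> \<le> (\<Sum>ys\<in>surviving_paths Sbot n.
      traj_prob P pol s0 ys * (real n * (\<Sum>s\<in>UNIV. \<bar>R s\<bar>)))"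
    using abs_path_reward_le
    by (intro sum_mono mult_left_mono traj_prob_nonneg) (auto simp: surviving_paths_def)
  also have "\<dots> = (\<Sum>s\<in>UNIV. \<bar>R s\<bar>) * (real n * survival n)"
    by (simp add: survival_def sum_distrib_left sum_distrib_right mult_ac)
  finally show ?thesis .
qed

lemma surviving_reward_tendsto_0: "surviving_reward R \<longlonglongrightarrow> 0"
proof (rule tendsto_sandwich[where f = "\<lambda>n. - ((\<Sum>s\<in>UNIV. \<bar>R s\<bar>) * (real n * survival n))"
      and h = "\<lambda>n. (\<Sum>s\<in>UNIV. \<bar>R s\<bar>) * (real n * survival n)"])
  have "(\<lambda>n. (\<Sum>s\<in>UNIV. \<bar>R s\<bar>) * (real n * survival n)) \<longlonglongrightarrow> (\<Sum>s\<in>UNIV. \<bar>R s\<bar>) * 0"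
    by (intro tendsto_intros n_survival_tendsto_0)
  then show "(\<lambda>n. (\<Sum>s\<in>UNIV. \<bar>R s\<bar>) * (real n * survival n)) \<longlonglongrightarrow> 0"
    and "(\<lambda>n. - ((\<Sum>s\<in>UNIV. \<bar>R s\<bar>) * (real n * survival n))) \<longlonglongrightarrow> 0"
    using tendsto_minus by fastforce+
  show "\<forall>\<^sub>F n in sequentially. - ((\<Sum>s\<in>UNIV. \<bar>R s\<bar>) * (real n * survival n)) \<le> surviving_reward R n"
    and "\<forall>\<^sub>F n in sequentially. surviving_reward R n \<le> (\<Sum>s\<in>UNIV. \<bar>R s\<bar>) * (real n * survival n)"
    using abs_surviving_reward_le[of R] by (auto intro!: always_eventually simp: abs_le_iff minus_le_iff)
qed

lemma J_eq_occupancy: "J P R pol s0 Sbot = (\<Sum>s\<in>UNIV. occupancy s * R s)"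
proof -
  have "surviving_reward R 0 = 0"
    by (simp add: surviving_reward_def surviving_paths_0 path_reward_Nil)
  then have "(\<Sum>n<N. terminating_reward R (Suc n))
      = (\<Sum>n<N. \<Sum>s\<in>UNIV. occ n s * R s) - surviving_reward R N" for N
    by (simp add: terminating_reward_Suc sum.distrib sum_lessThan_telescope')
  moreover have "(\<lambda>N. (\<Sum>n<N. \<Sum>s\<in>UNIV. occ n s * R s) - surviving_reward R N)
      \<longlonglongrightarrow> (\<Sum>s\<in>UNIV. occupancy s * R s) - 0"
    using surviving_reward_tendsto_0 weighted_occ_sums[where A=UNIV and g=R]
    unfolding sums_def by (intro tendsto_intros)
  ultimately have "(\<lambda>n. terminating_reward R (Suc n)) sums (\<Sum>s\<in>UNIV. occupancy s * R s)"
    unfolding sums_def by simp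
  then have "terminating_reward R sums (\<Sum>s\<in>UNIV. occupancy s * R s)"
    using sums_Suc_iff[of "terminating_reward R"]
    by (simp add: terminating_reward_def term_paths_0)
  moreover have "J P R pol s0 Sbot = suminf (terminating_reward R)"
    unfolding J_def expect_T_def terminating_reward_def path_reward_def ..
  ultimately show ?thesis
    using sums_unique by metis
qed

lemma sum_K_closed_set:
  assumes closed: "\<And>s a s'. s \<in> C \<Longrightarrow> pol s a > 0 \<Longrightarrow> P s a s' > 0 \<Longrightarrow> s' \<in> C"
    and "t \<in> C"
  shows "(\<Sum>s'\<in>C. K t s') = 1"
proof -
  have "K t s' = 0" if "s' \<notin> C" for s'
    unfolding state_kernel_def
  proof (intro sum.neutral ballI)
    fix a
    have "pol t a = 0 \<or> P t a s' = 0"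
      using closed[OF \<open>t \<in> C\<close>, of a s'] that pol_nonneg[of t a] P_nonneg[of t a s']
      by (force simp: less_le)
    then show "P t a s' * pol t a = 0" by auto
  qed
  then have "(\<Sum>s'\<in>C. K t s') = (\<Sum>s'\<in>UNIV. K t s')"
    by (intro sum.mono_neutral_left) auto
  then show ?thesis by (simp add: sum_K)
qed

text \<open>A set of non-terminal states that the chain cannot leave traps the mass it holds, which
  is incompatible with \<open>Pr(T > n) \<rightarrow> 0\<close>.\<close>
lemma closed_nonterminal_set_unoccupied:
  assumes C_nonterminal: "C \<subseteq> -Sbot"
    and closed: "\<And>s a s'. s \<in> C \<Longrightarrow> pol s a > 0 \<Longrightarrow> P s a s' > 0 \<Longrightarrow> s' \<in> C"
    and "c \<in> C"
  shows "occ n c = 0"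
proof -
  define mass where "mass n = (\<Sum>s\<in>C. occ n s)" for n
  have stays: "(\<Sum>s'\<in>C. K t s') = 1" if "t \<in> C" for t
    using closed that by (rule sum_K_closed_set)
  have mass_mono: "mass n \<le> mass (Suc n)" for n
  proof -
    have "mass n = (\<Sum>t\<in>C. occ n t * (\<Sum>s'\<in>C. K t s'))"
      unfolding mass_def by (simp add: stays)
    also have "\<dots> = (\<Sum>s'\<in>C. \<Sum>t\<in>C. occ n t * K t s')"
      by (subst sum.swap) (simp add: sum_distrib_left)
    also have "\<dots> \<le> (\<Sum>s'\<in>C. \<Sum>t\<in>-Sbot. occ n t * K t s')"
      by (intro sum_mono sum_mono2 C_nonterminal) (auto intro: mult_nonneg_nonneg occ_nonneg K_nonneg)
    finally show ?thesis by (simp add: mass_def)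
  qed
  have "mass n \<le> survival (Suc m)" if "n \<le> m" for m
  proof -
    have "mass n \<le> mass m"
      using that by (induction m rule: dec_induct) (auto intro: order_trans[OF _ mass_mono])
    also have "\<dots> \<le> survival (Suc m)"
      unfolding mass_def survival_Suc by (intro sum_mono2 C_nonterminal) (auto intro: occ_nonneg)
    finally show ?thesis .
  qed
  then have "\<forall>m\<ge>n. mass n \<le> survival (Suc m)" by blast
  with LIMSEQ_Suc[OF survival_tendsto_0] have "mass n \<le> 0"
    by (intro LIMSEQ_le_const) auto
  moreover have "occ n c \<le> mass n"
    unfolding mass_def using \<open>c \<in> C\<close> by (intro member_le_sum) (auto intro: occ_nonneg)
  ultimately show ?thesis
    using occ_nonneg[of n c] by simp
qed

end

context elp
begin

lemma alive_occupancy_step_pos: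
  assumes sig_nonneg: "\<And>s a. 0 \<le> sig s a" and step: "P s a s' > 0"
    and occupied: "s \<in> Sbot \<or> (\<exists>n. alive_occupancy P sig \<rho> Sbot n s > 0) \<and> sig s a > 0"
  shows "\<exists>k. alive_occupancy P sig \<rho> Sbot k s' > 0"
proof (cases "s \<in> Sbot")
  case True
  then have "alive_occupancy P sig \<rho> Sbot 0 s' = P s a s'"
    by (simp add: P_terminal)
  with step show ?thesis by (intro exI[of _ 0]) simp
next
  case False
  have K_sig_nonneg: "0 \<le> state_kernel P sig t t'" for t t'
    unfolding state_kernel_def by (intro sum_nonneg mult_nonneg_nonneg P_nonneg sig_nonneg)
  from False occupied obtain n where occ_pos: "alive_occupancy P sig \<rho> Sbot n s > 0"
    and "sig s a > 0" by auto
  then have "0 < alive_occupancy P sig \<rho> Sbot n s * (P s a s' * sig s a)"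
    using step by simp
  also have "\<dots> \<le> alive_occupancy P sig \<rho> Sbot n s * state_kernel P sig s s'"
    using occ_pos by (intro mult_left_mono state_kernel_ge P_nonneg sig_nonneg) auto
  also have "\<dots> \<le> alive_occupancy P sig \<rho> Sbot (Suc n) s'"
    by (intro alive_occupancy_Suc_ge rho_nonneg K_sig_nonneg False)
  finally show ?thesis by blast
qed

text \<open>Until the path enters \<open>C\<close>, a policy agreeing with \<open>pol'\<close> off \<open>C\<close> takes each of its steps
  with positive probability while the episode is still running.\<close>
lemma alive_occupancy_pos_along_path:
  assumes pol'_nonneg: "\<And>s a. 0 \<le> pol' s a"
    and sig_nonneg: "\<And>s a. 0 \<le> sig s a"
    and sig_eq: "\<And>s. s \<notin> C \<Longrightarrow> sig s = pol' s"
  shows "traj_weight P pol' s a xs \<noteq> 0 \<Longrightarrow> pol' s a \<noteq> 0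
    \<Longrightarrow> s \<in> Sbot \<or> (s \<notin> C \<and> (\<exists>n. alive_occupancy P sig \<rho> Sbot n s > 0))
    \<Longrightarrow> xs \<noteq> [] \<Longrightarrow> fst (last xs) \<in> C
    \<Longrightarrow> \<exists>n c. c \<in> C \<and> alive_occupancy P sig \<rho> Sbot n c > 0"
proof (induction xs arbitrary: s a)
  case Nil
  then show ?case by simp
next
  case (Cons x ys)
  obtain s' a' where x: "x = (s', a')" by fastforce
  from Cons.prems(1) have step: "P s a s' \<noteq> 0" and act: "pol' s' a' \<noteq> 0"
    and rest: "traj_weight P pol' s' a' ys \<noteq> 0" by (auto simp: x)
  have "sig s a > 0" if "s \<notin> C"
    using Cons.prems(2) pol'_nonneg[of s a] sig_eq[OF that] by simp
  then have next_occupied: "\<exists>k. alive_occupancy P sig \<rho> Sbot k s' > 0"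
    using step P_nonneg[of s a s'] Cons.prems(3)
    by (intro alive_occupancy_step_pos[OF sig_nonneg]) auto
  show ?case
  proof (cases "s' \<in> C")
    case True
    with next_occupied show ?thesis by blast
  next
    case False
    with Cons.prems(5) have "ys \<noteq> []" "fst (last ys) \<in> C" by (auto simp: x split: if_splits)
    with False next_occupied show ?thesis by (intro Cons.IH[OF rest act]) auto
  qed
qed

lemma exists_policy_occupying:
  assumes "is_policy pol" and "C \<subseteq> -Sbot" and "c \<in> C"
  shows "\<exists>sig. is_policy sig \<and> (\<forall>s\<in>C. sig s = pol s)
    \<and> (\<exists>n c'. c' \<in> C \<and> alive_occupancy P sig \<rho> Sbot n c' > 0)"
proof -
  from elp obtain pol' where pol': "is_policy pol'"
    and reach: "c = s0 \<or> (\<exists>xs. xs \<noteq> [] \<and> fst (last xs) = c \<and> traj_prob P pol' s0 xs > 0)"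
    unfolding finite_ELP_def by blast
  have "c \<noteq> s0" using assms s0_terminal by auto
  with reach obtain xs where xs: "xs \<noteq> []" "fst (last xs) = c" "traj_prob P pol' s0 xs > 0"
    by auto
  then obtain a0 where a0: "pol' s0 a0 * traj_weight P pol' s0 a0 xs \<noteq> 0"
    unfolding traj_prob_def by (metis (mono_tags, lifting) less_irrefl sum.neutral)
  define sig where "sig s = (if s \<in> C then pol s else pol' s)" for s
  have "is_policy sig"
    using assms(1) pol' by (auto simp: is_policy_def sig_def)
  moreover have "\<exists>n c'. c' \<in> C \<and> alive_occupancy P sig \<rho> Sbot n c' > 0"
    by (rule alive_occupancy_pos_along_path[where pol'=pol' and s=s0 and a=a0 and xs=xs])
      (use a0 xs assms s0_terminal pol' in \<open>auto simp: sig_def is_policy_def is_dist_def\<close>)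
  moreover have "\<forall>s\<in>C. sig s = pol s"
    by (simp add: sig_def)
  ultimately show ?thesis
    by blast
qed

lemma no_closed_nonterminal_set:
  assumes "is_policy pol" and "C \<subseteq> -Sbot" and "c \<in> C"
    and closed: "\<And>s a s'. s \<in> C \<Longrightarrow> pol s a > 0 \<Longrightarrow> P s a s' > 0 \<Longrightarrow> s' \<in> C"
  shows False
proof -
  obtain sig n c' where sig: "is_policy sig" "\<forall>s\<in>C. sig s = pol s"
    and "c' \<in> C" "alive_occupancy P sig \<rho> Sbot n c' > 0"
    using exists_policy_occupying[OF assms(1-3)] by blast
  interpret sig: elp_policy P \<rho> Sbot s0 sig
    by unfold_locales (rule sig(1))
  have "alive_occupancy P sig \<rho> Sbot n c' = 0"
    by (rule sig.closed_nonterminal_set_unoccupied[OF assms(2) _ \<open>c' \<in> C\<close>])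
      (use closed sig(2) in auto)
  with \<open>alive_occupancy P sig \<rho> Sbot n c' > 0\<close> show False by simp
qed

end

context elp_policy
begin

lemma nonneg_subinvariant_vanishes:
  assumes nonneg: "\<And>s. 0 \<le> v s"
    and invariant: "\<And>s'. v s' = (\<Sum>s\<in>-Sbot. v s * K s s')"
  shows "v s = 0"
proof (rule ccontr)
  assume "v s \<noteq> 0"
  have "(\<Sum>s'\<in>UNIV. v s') = (\<Sum>s\<in>-Sbot. v s * (\<Sum>s'\<in>UNIV. K s s'))"
    by (subst invariant) (subst sum.swap, simp add: sum_distrib_left)
  then have "(\<Sum>s\<in>Sbot. v s) = 0"
    using sum_UNIV_Compl_split[of v Sbot] by (simp add: sum_K)
  then have "v b = 0" if "b \<in> Sbot" for b
    using sum_nonneg_eq_0_iff[of Sbot v] nonneg that by auto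
  then have support_nonterminal: "{s. v s > 0} \<subseteq> -Sbot" by force
  show False
  proof (rule no_closed_nonterminal_set[OF policy support_nonterminal])
    show "s \<in> {s. v s > 0}"
      using \<open>v s \<noteq> 0\<close> nonneg[of s] by simp
    fix t a t' assume "t \<in> {s. v s > 0}" "pol t a > 0" "P t a t' > 0"
    then have "0 < v t * (P t a t' * pol t a)" by simp
    also have "\<dots> \<le> v t * K t t'"
      by (intro mult_left_mono state_kernel_ge P_nonneg pol_nonneg nonneg)
    also have "\<dots> \<le> v t'"
      using support_nonterminal \<open>t \<in> {s. v s > 0}\<close> unfolding invariant[of t']
      by (intro member_le_sum[where f="\<lambda>s. v s * K s t'"]) (auto intro: mult_nonneg_nonneg nonneg K_nonneg)
    finally show "t' \<in> {s. v s > 0}" by simp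
  qed
qed

lemma stationary_eq_rho_plus:
  assumes "is_stationary P pol d"
  shows "d s' = (\<Sum>b\<in>Sbot. d b) * \<rho> s' + (\<Sum>s\<in>-Sbot. d s * K s s')"
proof -
  have "d s' = (\<Sum>s\<in>UNIV. d s * K s s')"
    using assms unfolding is_stationary_def state_kernel_def by blast
  then show ?thesis
    unfolding sum_UNIV_Compl_split[of _ Sbot] by (simp add: K_terminal sum_distrib_right)
qed

lemma scaled_occupancy_le_stationary:
  assumes "is_stationary P pol d"
  shows "(\<Sum>b\<in>Sbot. d b) * occupancy s \<le> d s"
proof -
  define c where "c = (\<Sum>b\<in>Sbot. d b)"
  define w where "w n s = d s - c * (\<Sum>k<n. occ k s)" for n s
  have "0 \<le> w n s" for n s
  proof (induction n arbitrary: s)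
    case 0
    have "0 \<le> d s"
      using assms unfolding is_stationary_def is_dist_def by blast
    then show ?case by (simp add: w_def)
  next
    case (Suc n)
    have "(\<Sum>k<Suc n. occ k s) = \<rho> s + (\<Sum>k<n. \<Sum>t\<in>-Sbot. occ k t * K t s)"
      by (subst sum.lessThan_Suc_shift) simp
    also have "\<dots> = \<rho> s + (\<Sum>t\<in>-Sbot. (\<Sum>k<n. occ k t) * K t s)"
      by (subst sum.swap) (simp add: sum_distrib_right)
    finally have "w (Suc n) s = (\<Sum>t\<in>-Sbot. d t * K t s) - c * (\<Sum>t\<in>-Sbot. (\<Sum>k<n. occ k t) * K t s)"
      using stationary_eq_rho_plus[OF assms, of s] by (simp add: w_def c_def algebra_simps)
    also have "\<dots> = (\<Sum>t\<in>-Sbot. w n t * K t s)"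
      by (simp add: w_def left_diff_distrib sum_subtractf sum_distrib_left sum_distrib_right mult.assoc)
    finally have "w (Suc n) s = (\<Sum>t\<in>-Sbot. w n t * K t s)" .
    then show ?case
      by (simp add: Suc sum_nonneg K_nonneg)
  qed
  then have "(\<Sum>k<n. c * occ k s) \<le> d s" for n
    by (simp add: w_def sum_distrib_left)
  then have "(\<Sum>k. c * occ k s) \<le> d s"
    by (intro suminf_le_const summable_mult summable_occ)
  then show ?thesis
    unfolding c_def occupancy_def by (simp add: suminf_mult summable_occ)
qed

lemma stationary_eq_occupancy:
  assumes "is_stationary P pol d"
  shows "d s * mean_T = occupancy s"
proof -
  define c where "c = (\<Sum>b\<in>Sbot. d b)"
  have "d s - c * occupancy s = 0" for s
  proof (rule nonneg_subinvariant_vanishes)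
    show "0 \<le> d s - c * occupancy s" for s
      using scaled_occupancy_le_stationary[OF assms] by (simp add: c_def)
    show "d s' - c * occupancy s' = (\<Sum>s\<in>-Sbot. (d s - c * occupancy s) * K s s')" for s'
      unfolding stationary_eq_rho_plus[OF assms, of s'] occupancy_eq_rho_plus[of s'] c_def
      by (simp add: algebra_simps sum_subtractf sum_distrib_left)
  qed
  then have d_eq: "d s = c * occupancy s" for s
    by simp
  have "sum d UNIV = 1"
    using assms unfolding is_stationary_def is_dist_def by blast
  then have "1 = c * mean_T"
    by (simp add: d_eq sum_occupancy flip: sum_distrib_left)
  then show ?thesis
    by (simp add: d_eq mult_ac)
qed

end

lemma sum_invariant_bellman:
  fixes P :: "'s::finite \<Rightarrow> 'a::finite \<Rightarrow> 's \<Rightarrow> real"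
  assumes invariant: "\<And>s'. \<mu> s' = (\<Sum>s\<in>UNIV. \<mu> s * state_kernel P pol s s')"
  shows "(\<Sum>s\<in>UNIV. \<Sum>a\<in>UNIV. \<mu> s * pol s a * bellman P R Sbot Q s a)
    = (\<Sum>s\<in>UNIV. \<mu> s * R s) + (\<Sum>s\<in>-Sbot. \<mu> s * Max (range (Q s)))"
proof -
  define X where "X s' = R s' + (if s' \<notin> Sbot then Max (range (Q s')) else 0)" for s'
  have "(\<Sum>s\<in>UNIV. \<Sum>a\<in>UNIV. \<mu> s * pol s a * bellman P R Sbot Q s a)
      = (\<Sum>s\<in>UNIV. \<Sum>a\<in>UNIV. \<Sum>s'\<in>UNIV. \<mu> s * (P s a s' * pol s a) * X s')"
    unfolding bellman_def X_def by (simp add: sum_distrib_left mult_ac)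
  also have "\<dots> = (\<Sum>s\<in>UNIV. \<Sum>s'\<in>UNIV. \<Sum>a\<in>UNIV. \<mu> s * (P s a s' * pol s a) * X s')"
    by (rule sum.cong[OF refl], rule sum.swap)
  also have "\<dots> = (\<Sum>s'\<in>UNIV. \<Sum>s\<in>UNIV. \<Sum>a\<in>UNIV. \<mu> s * (P s a s' * pol s a) * X s')"
    by (rule sum.swap)
  also have "\<dots> = (\<Sum>s'\<in>UNIV. (\<Sum>s\<in>UNIV. \<mu> s * state_kernel P pol s s') * X s')"
    by (simp add: state_kernel_def sum_distrib_left sum_distrib_right)
  also have "\<dots> = (\<Sum>s\<in>UNIV. \<mu> s * R s) + (\<Sum>s\<in>UNIV. \<mu> s * (if s \<notin> Sbot then Max (range (Q s)) else 0))"
    unfolding invariant[symmetric] X_def by (simp add: distrib_left sum.distrib)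
  also have "(\<Sum>s\<in>UNIV. \<mu> s * (if s \<notin> Sbot then Max (range (Q s)) else 0))
      = (\<Sum>s\<in>-Sbot. \<mu> s * Max (range (Q s)))"
    by (rule sum.mono_neutral_cong_right) auto
  finally show ?thesis .
qed

lemma sum_invariant_bellman_residual:
  fixes P :: "'s::finite \<Rightarrow> 'a::finite \<Rightarrow> 's \<Rightarrow> real"
  assumes invariant: "\<And>s'. \<mu> s' = (\<Sum>s\<in>UNIV. \<mu> s * state_kernel P pol s s')"
    and sum_pol: "\<And>s. sum (pol s) UNIV = 1"
  shows "(\<Sum>s\<in>UNIV. \<Sum>a\<in>UNIV. \<mu> s * pol s a * (bellman P R Sbot Q s a - Q s a))
    = (\<Sum>s\<in>UNIV. \<mu> s * R s)
      + (\<Sum>s\<in>-Sbot. \<Sum>a\<in>UNIV. \<mu> s * pol s a * (Max (range (Q s)) - Q s a))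
      - (\<Sum>s\<in>Sbot. \<mu> s * (\<Sum>a\<in>UNIV. pol s a * Q s a))"
proof -
  define V where "V s = (\<Sum>a\<in>UNIV. pol s a * Q s a)" for s
  have "(\<Sum>a\<in>UNIV. \<mu> s * pol s a * (Max (range (Q s)) - Q s a))
      = \<mu> s * Max (range (Q s)) * (\<Sum>a\<in>UNIV. pol s a) - \<mu> s * V s" for s
    by (simp add: V_def algebra_simps sum_subtractf sum_distrib_left sum_distrib_right)
  moreover have "(\<Sum>s\<in>UNIV. \<Sum>a\<in>UNIV. \<mu> s * pol s a * Q s a)
      = (\<Sum>s\<in>Sbot. \<mu> s * V s) + (\<Sum>s\<in>-Sbot. \<mu> s * V s)"
    unfolding sum_UNIV_Compl_split[of _ Sbot, symmetric] V_def by (simp add: sum_distrib_left mult_ac)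
  ultimately show ?thesis
    by (simp add: right_diff_distrib sum_subtractf sum_invariant_bellman[OF invariant] sum_pol V_def)
qed

theorem mainTheorem5:
  fixes P :: "'s::finite \<Rightarrow> 'a::finite \<Rightarrow> 's \<Rightarrow> real"
    and R :: "'s \<Rightarrow> real" and \<rho> :: "'s \<Rightarrow> real" and Sbot :: "'s set" and s0 :: 's
    and pol :: "'s \<Rightarrow> 'a \<Rightarrow> real" and d :: "'s \<Rightarrow> real" and Q :: "'s \<Rightarrow> 'a \<Rightarrow> real"
  assumes "finite_ELP P \<rho> Sbot s0"
    and "is_policy pol"
    and "is_stationary P pol d"
  shows "lagrangian P R pol s0 Sbot Q (lambda_pi P pol d s0 Sbot)
         = J P R pol s0 Sbot
           + (\<Sum>s\<in>- Sbot. \<Sum>a\<in>UNIV. lambda_pi P pol d s0 Sbot s a * (Max (range (Q s)) - Q s a))"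
proof -
  interpret elp_policy P \<rho> Sbot s0 pol
    by unfold_locales (fact assms)+
  have lambda: "lambda_pi P pol d s0 Sbot s a = occupancy s * pol s a" for s a
    using stationary_eq_occupancy[OF assms(3), of s]
    by (simp add: lambda_pi_def enn2real_expected_T mult_ac)
  show ?thesis
    unfolding lagrangian_def lambda expect_T_terminal_Q J_eq_occupancy
      sum_invariant_bellman_residual[OF occupancy_invariant sum_pol]
    by simp
qed

end
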